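(* Let $p, q$ be integers, let $z$ be a positive integer and let $u$ be an integer. Consider the congruence $$xz \equiv 2^q u + y \pmod{2^p}$$ in the integer unknowns $x, y$. Define $$x_0=\left\lceil\frac{2^q u}{z}\right\rceil,\quad y_0 = z x_0 - 2^q u;\qquad x_1=\left\lfloor\frac{2^q u}{z}\right\rfloor,\quad y_1 = z x_1 - 2^p;\qquad x_2=\left\lfloor\frac{2^q u}{z}\right\rfloor+1,\quad y_2 = z x_2 - 2^p.$$ Then every integer solution $(x,y)$ of the congruence is of the form $$\begin{bmatrix} x\\ y\end{bmatrix}=\begin{bmatrix} x_0+\alpha_1 x_1+\alpha_2 x_2\\ y_0+\alpha_1 y_1+\alpha_2 y_2\end{bmatrix}$$ for some integers $\alpha_1,\alpha_2\in\mathbb{Z}$.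
   Context: This arises from inverting $F(x)=\lfloor ((xz) \bmod 2^p)/2^q\rfloor$: if $F(x)=u$ then $xz \equiv 2^q u + y \pmod{2^p}$ for some integer $y$ with $0\le y<2^q$. Here $a \bmod n$ denotes the nonnegative remainder of $a$ upon division by $n$. *)

theory Defs
  imports Complex_Main "HOL-Number_Theory.Cong"
begin

end

theory Submission
  imports Defs
begin

text \<open>
  If \<open>x z = c + y + m k\<close>, then \<open>(x, y)\<close> differs from the particular solution
  \<open>(x\<^sub>0, z x\<^sub>0 - c)\<close> by \<open>(x - x\<^sub>0) \<cdot> (1, z) + k \<cdot> (0, -m)\<close>, and these two generators of the
  solution lattice are \<open>(x\<^sub>2, y\<^sub>2) - (x\<^sub>1, y\<^sub>1)\<close> and \<open>(x\<^sub>1, y\<^sub>1) - x\<^sub>1 \<cdot> (1, z)\<close>.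
\<close>

lemma cong_solution_decomposition:
  fixes x y z c m x0 f :: int
  assumes "[x * z = c + y] (mod m)"
  shows "\<exists>a1 a2. x = x0 + a1 * f + a2 * (f + 1)
                \<and> y = (z * x0 - c) + a1 * (z * f - m) + a2 * (z * (f + 1) - m)"
proof -
  obtain k where k: "x * z = c + y + m * k"
  proof -
    from assms obtain k' where "c + y = x * z + m * k'"
      unfolding cong_iff_lin by blast
    then show ?thesis using that[of "- k'"] by simp
  qed
  define a2 where "a2 = x - x0 - k * f"
  define a1 where "a1 = k - a2"
  have x_eq: "x = x0 + a1 * f + a2 * (f + 1)"
    unfolding a1_def a2_def by (simp add: algebra_simps)
  have "(z * x0 - c) + a1 * (z * f - m) + a2 * (z * (f + 1) - m)
        = z * (x0 + a1 * f + a2 * (f + 1)) - c - m * (a1 + a2)"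
    by (simp add: algebra_simps)
  also have "\<dots> = z * x - c - m * k"
    by (subst x_eq) (simp add: a1_def)
  also have "\<dots> = y"
    using k by (simp add: mult.commute)
  finally show ?thesis using x_eq by metis
qed

theorem theorem1:
  fixes p q :: nat and z u x y :: int
  assumes "z > 0"
    and "[x * z = 2 ^ q * u + y] (mod 2 ^ p)"
  shows "let x0 = \<lceil>real_of_int (2 ^ q * u) / real_of_int z\<rceil>;
             y0 = z * x0 - 2 ^ q * u;
             x1 = \<lfloor>real_of_int (2 ^ q * u) / real_of_int z\<rfloor>;
             y1 = z * x1 - 2 ^ p;
             x2 = \<lfloor>real_of_int (2 ^ q * u) / real_of_int z\<rfloor> + 1;
             y2 = z * x2 - 2 ^ p
         in \<exists>a1 a2 :: int. x = x0 + a1 * x1 + a2 * x2 \<and> y = y0 + a1 * y1 + a2 * y2"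
  using cong_solution_decomposition[OF assms(2),
      of "\<lceil>real_of_int (2 ^ q * u) / real_of_int z\<rceil>"
         "\<lfloor>real_of_int (2 ^ q * u) / real_of_int z\<rfloor>"]
  unfolding Let_def by blast

end
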